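(* Let $k\ge 1$, $N\ge 3$ and $a\ge 2$ be integers, and let $v=v_2$. (i) $$\frac{(k2^N+2a-3)!!}{(k2^N+1)!!}\equiv\begin{cases}(2a-3)!! \pmod{2^{N+1+\min\{v(a),\,N-1\}}}, & \text{if } 2\mid a,\\ (2a-3)!!+k2^N \pmod{2^{N+1}}, & \text{if } 2\nmid a.\end{cases}$$ (ii) $$(k2^N+2a-3)!!\equiv\begin{cases}(2a-3)!! \pmod{2^{N+1}}, & \text{if } 2\mid a,\\ (2a-3)!!+k2^N \pmod{2^{N+1}}, & \text{if } 2\nmid a.\end{cases}$$ (iii) If $k$ is odd, then $$(k2^N-3)!!\equiv\begin{cases}-1+(-1)^{\frac{k-1}{2}}2^{N+1}\pmod{2^{N+3}}, & \text{if } N=3,\\ -1+(-1)^{\frac{k+1}{2}}2^{N+1}\pmod{2^{N+3}}, & \text{if } N\ge 4.\end{cases}$$ In particular $(k2^N-3)!!\equiv -1+2^{N+1}\pmod{2^{N+2}}$.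
   Context: For a positive odd integer $b$, $b!!=b(b-2)\cdots3\cdot1$. $v_2$ denotes the $2$-adic valuation. *)

theory Defs
  imports "HOL-Number_Theory.Number_Theory"
begin

fun dfact :: "nat \<Rightarrow> nat" where
  "dfact 0 = 1"
| "dfact (Suc 0) = 1"
| "dfact (Suc (Suc n)) = Suc (Suc n) * dfact n"

end

theory Submission
  imports Defs
begin

text \<open>Pairing factors from both ends shows
that shifting a product of even length n by t changes it only modulo t(t + 2s + 2n), because
(s + t + 1)(s + t + 2n - 1) - (s + 1)(s + 2n - 1) = t(t + 2s + 2n). With s = 2 and t = k 2^N this
gives (i); for odd a the extra last factor contributes the term k 2^N. Applied to blocks of length
2^(N-1) it gives (k 2^N - 1)!! \<equiv> ((2^N - 1)!!)^k \<equiv> 1 + c k 2^N (mod 2^(N+3)), where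
(2^N - 1)!! \<equiv> 1 + c 2^N with c = 5 for N = 3 and c = 1 for N \<ge> 4 (repeated squaring from 15!!).
Multiplying by k 2^N + 1 gives (ii); dividing by k 2^N - 1 gives (iii), using
k \<equiv> (-1)^((k-1)/2) (mod 4).\<close>

definition oddprod :: "int \<Rightarrow> nat \<Rightarrow> int" where
  "oddprod s n = (\<Prod>i<n. s + 2 * int i + 1)"

lemma oddprod_0 [simp]: "oddprod s 0 = 1"
  by (simp add: oddprod_def)

lemma oddprod_Suc: "oddprod s (Suc n) = oddprod s n * (s + 2 * int n + 1)"
  by (simp add: oddprod_def)

lemma oddprod_add: "oddprod s (m + n) = oddprod s m * oddprod (s + 2 * int m) n"
  by (induction n) (simp_all add: oddprod_Suc algebra_simps)

lemma oddprod_Suc_Suc: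
  "oddprod s (Suc (Suc n)) = (s + 1) * (s + 2 * int n + 3) * oddprod (s + 2) n"
proof -
  have "oddprod s (Suc (Suc n)) = oddprod s (1 + (n + 1))" by simp
  also have "\<dots> = (s + 1) * (oddprod (s + 2) n * (s + 2 * int n + 3))"
    by (simp only: oddprod_add oddprod_Suc) (simp add: oddprod_Suc algebra_simps)
  finally show ?thesis by (simp add: algebra_simps)
qed

lemma odd_oddprod: "even s \<Longrightarrow> odd (oddprod s n)"
  by (induction n) (simp_all add: oddprod_Suc)

lemma dfact_pos: "dfact n > 0"
  by (induction n rule: dfact.induct) auto

lemma dfact_add_double: "int (dfact (m + 2 * n)) = int (dfact m) * oddprod (int m + 1) n"
proof (induction n)
  case (Suc n)
  have "dfact (m + 2 * Suc n) = (m + 2 * n + 2) * dfact (m + 2 * n)"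
    by (simp add: numeral_eq_Suc)
  then show ?case using Suc by (simp add: oddprod_Suc algebra_simps)
qed simp

lemma dfact_add_double_div: "int (dfact (m + 2 * n) div dfact m) = oddprod (int m + 1) n"
  using dfact_pos[of m] by (simp add: zdiv_int dfact_add_double)

lemma oddprod_0_eq_dfact: "oddprod 0 n = int (dfact (2 * n - 1))"
proof (cases n)
  case (Suc m)
  have "oddprod 0 (1 + m) = oddprod 2 m" by (simp only: oddprod_add) (simp add: oddprod_Suc)
  also have "\<dots> = int (dfact (1 + 2 * m))" using dfact_add_double[of 1 m] by simp
  finally show ?thesis using Suc by simp
qed simp

lemma dfact_double_Suc: "int (dfact (2 * n + 1)) = oddprod 0 n * (2 * int n + 1)"
  using oddprod_0_eq_dfact[of "Suc n"] by (simp add: oddprod_Suc)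

lemma dfact_double_minus_3:
  assumes "1 \<le> n"
  shows "int (dfact (2 * n - 3)) * (2 * int n - 1) = oddprod 0 n"
proof -
  obtain m where n: "n = Suc m" using assms by (cases n) simp_all
  have "2 * n - 3 = 2 * m - 1" by (simp add: n)
  then show ?thesis by (simp add: n oddprod_Suc oddprod_0_eq_dfact)
qed

lemma oddprod_shift_cong:
  assumes "even n"
  shows "[oddprod (s + t) n = oddprod s n] (mod t * (t + 2 * s + 2 * int n))"
proof -
  obtain b where n: "n = 2 * b" using assms by (elim evenE)
  have "[oddprod (s + t) (2 * b) = oddprod s (2 * b)] (mod t * (t + 2 * s + 4 * int b))"
  proof (induction b arbitrary: s)
    case (Suc b)
    have inner: "[oddprod (s + 2 + t) (2 * b) = oddprod (s + 2) (2 * b)]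
        (mod t * (t + 2 * s + 4 * int (Suc b)))"
      using Suc[of "s + 2"] by (simp add: algebra_simps)
    \<comment> \<open>pair the first factor with the last one\<close>
    have "(s + t + 1) * (s + t + 2 * int (2 * b) + 3) - (s + 1) * (s + 2 * int (2 * b) + 3)
        = t * (t + 2 * s + 4 * int (Suc b))"
      by (simp add: algebra_simps)
    then have outer: "[(s + t + 1) * (s + t + 2 * int (2 * b) + 3) = (s + 1) * (s + 2 * int (2 * b) + 3)]
        (mod t * (t + 2 * s + 4 * int (Suc b)))"
      unfolding cong_iff_dvd_diff by simp
    have "2 * Suc b = Suc (Suc (2 * b))" by simp
    then show ?case using cong_mult[OF outer inner]
      by (simp only: oddprod_Suc_Suc) (simp add: algebra_simps)
  qed simp
  then show ?thesis by (simp add: n)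
qed

lemma oddprod_shift_even_cong:
  fixes a N :: nat
  assumes "even a" and "2 \<le> a" and "1 \<le> N" and "2 ^ N dvd t"
  shows "[oddprod (2 + t) (a - 2) = oddprod 2 (a - 2)]
    (mod 2 ^ (N + 1 + min (multiplicity (2::nat) a) (N - 1)))"
proof -
  define m where "m = min (multiplicity (2::nat) a) (N - 1)"
  have "(2::nat) ^ m dvd a"
    using multiplicity_dvd[of 2 a] le_imp_power_dvd[of m "multiplicity 2 a" 2]
    unfolding m_def by (meson dvd_trans min.cobounded1)
  then have "(2::int) ^ m dvd int a"
    by (metis of_nat_dvd_iff of_nat_numeral of_nat_power)
  then have "(2::int) ^ (m + 1) dvd 2 * int a"
    by (simp add: mult_dvd_mono)
  moreover have "(2::int) ^ (m + 1) dvd 2 ^ N"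
    using assms(3) unfolding m_def by (intro le_imp_power_dvd) simp
  then have "(2::int) ^ (m + 1) dvd t" using assms(4) by (rule dvd_trans)
  ultimately have "2 ^ (m + 1) dvd t + 2 * 2 + 2 * int (a - 2)"
    using assms(2) by (simp add: of_nat_diff)
  with assms(4) have "2 ^ N * 2 ^ (m + 1) dvd t * (t + 2 * 2 + 2 * int (a - 2))"
    by (rule mult_dvd_mono)
  then have "2 ^ (N + 1 + m) dvd t * (t + 2 * 2 + 2 * int (a - 2))"
    by (simp add: power_add mult_ac)
  moreover have "even (a - 2)" using assms(1,2) by simp
  ultimately show ?thesis
    unfolding m_def using oddprod_shift_cong cong_dvd_modulus by blast
qed

lemma oddprod_shift_odd_cong:
  assumes "even s" and "odd n" and "1 \<le> N" and "2 ^ N dvd t"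
  shows "[oddprod (s + t) n = oddprod s n + t] (mod 2 ^ (N + 1))"
proof -
  obtain m where n: "n = Suc m" and "even m" using assms(2) by (cases n) auto
  have "(2::int) dvd 2 ^ N" using assms(3) by (simp add: dvd_power_iff_le)
  then have "even t" using assms(4) by (rule dvd_trans)
  then have "2 dvd t + 2 * s + 2 * int m" by simp
  with assms(4) have "2 ^ N * 2 dvd t * (t + 2 * s + 2 * int m)"
    by (rule mult_dvd_mono)
  then have "2 ^ (N + 1) dvd t * (t + 2 * s + 2 * int m)"
    by (simp add: mult.commute)
  with oddprod_shift_cong[OF \<open>even m\<close>]
  have "[oddprod (s + t) m = oddprod s m] (mod 2 ^ (N + 1))"
    using cong_dvd_modulus by blast
  then have shifted: "[oddprod (s + t) n = oddprod s m * (s + 2 * int m + 1 + t)] (mod 2 ^ (N + 1))"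
    unfolding n oddprod_Suc by (rule cong_scalar_right[THEN cong_trans]) (simp add: algebra_simps)
  \<comment> \<open>the surplus factor is (oddprod s m - 1) t, an even multiple of 2^N\<close>
  have "2 ^ (N + 1) dvd (oddprod s m - 1) * t"
    using odd_oddprod[OF assms(1), of m] assms(4) by (simp add: mult_dvd_mono)
  moreover have "oddprod s m * (s + 2 * int m + 1 + t) - (oddprod s n + t) = (oddprod s m - 1) * t"
    unfolding n oddprod_Suc by (simp add: algebra_simps)
  ultimately have "[oddprod s m * (s + 2 * int m + 1 + t) = oddprod s n + t] (mod 2 ^ (N + 1))"
    unfolding cong_iff_dvd_diff by simp
  with shifted show ?thesis by (rule cong_trans)
qed

lemma oddprod_shift_pow2_cong:
  assumes "1 \<le> j" and "2 ^ (j + 1) dvd t"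
  shows "[oddprod t (2 ^ j) = oddprod 0 (2 ^ j)] (mod 2 ^ (2 * j + 2))"
proof -
  have "even ((2::nat) ^ j)" using assms(1) by simp
  from oddprod_shift_cong[OF this, of 0 t]
  have "[oddprod t (2 ^ j) = oddprod 0 (2 ^ j)] (mod t * (t + 2 ^ (j + 1)))"
    by simp
  moreover have "2 ^ (j + 1) * 2 ^ (j + 1) dvd t * (t + 2 ^ (j + 1))"
    using assms(2) by (intro mult_dvd_mono) simp_all
  moreover have "(2::int) ^ (j + 1) * 2 ^ (j + 1) = 2 ^ (2 * j + 2)"
    by (simp flip: power_add)
  ultimately show ?thesis by (metis cong_dvd_modulus)
qed

lemma oddprod_mult_pow2_cong:
  assumes "1 \<le> j"
  shows "[oddprod 0 (k * 2 ^ j) = oddprod 0 (2 ^ j) ^ k] (mod 2 ^ (2 * j + 2))"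
proof (induction k)
  case (Suc k)
  have split: "oddprod 0 (Suc k * 2 ^ j) = oddprod 0 (k * 2 ^ j) * oddprod (2 * int (k * 2 ^ j)) (2 ^ j)"
    using oddprod_add[of 0 "k * 2 ^ j" "2 ^ j"] by (simp add: add.commute)
  have "2 ^ (j + 1) dvd 2 * int (k * 2 ^ j)" by simp
  then have "[oddprod (2 * int (k * 2 ^ j)) (2 ^ j) = oddprod 0 (2 ^ j)] (mod 2 ^ (2 * j + 2))"
    by (rule oddprod_shift_pow2_cong[OF assms])
  from cong_mult[OF Suc this] show ?case
    by (simp only: split power_Suc2)
qed simp

lemma one_plus_power_cong: "[(1 + x) ^ k = 1 + int k * x] (mod x ^ 2)"
proof (induction k)
  case (Suc k)
  have "[(1 + x) ^ Suc k = (1 + int k * x) * (1 + x)] (mod x ^ 2)"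
    using cong_scalar_right[OF Suc] by (simp add: mult.commute)
  moreover have "(1 + int k * x) * (1 + x) - (1 + int (Suc k) * x) = x ^ 2 * int k"
    by (simp add: algebra_simps power2_eq_square)
  then have "[(1 + int k * x) * (1 + x) = 1 + int (Suc k) * x] (mod x ^ 2)"
    unfolding cong_iff_dvd_diff by simp
  ultimately show ?case by (rule cong_trans)
qed simp

lemma square_one_plus_pow2_cong:
  fixes E :: int
  assumes "3 \<le> j" and "[E = 1 + 2 ^ (j + 1)] (mod 2 ^ (j + 4))"
  shows "[E ^ 2 = 1 + 2 ^ (j + 2)] (mod 2 ^ (j + 5))"
proof -
  obtain m where j: "j = m + 3" using assms(1) by (metis add.commute le_Suc_ex)
  have "2 ^ (m + 7) dvd E - (1 + 2 ^ (m + 4))"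
    using assms(2) unfolding j cong_iff_dvd_diff by (simp add: add.commute)
  then obtain q where "E - (1 + 2 ^ (m + 4)) = 2 ^ (m + 7) * q" by (elim dvdE)
  then have q: "E = 1 + 2 ^ (m + 4) + 2 ^ (m + 7) * q" by simp
  have "E ^ 2 - (1 + 2 ^ (m + 5)) = 2 ^ (m + 8) * (2 ^ m + 2 ^ (m + 6) * q ^ 2 + q + 2 ^ (m + 4) * q)"
    unfolding q by (simp add: algebra_simps power2_eq_square power_add)
  then show ?thesis unfolding j cong_iff_dvd_diff by (simp add: add.commute)
qed

lemma oddprod_pow2_cong:
  assumes "3 \<le> j"
  shows "[oddprod 0 (2 ^ j) = 1 + 2 ^ (j + 1)] (mod 2 ^ (j + 4))"
  using assms
proof (induction j rule: dec_induct)
  case base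
  have "oddprod 0 8 = 2027025" by (simp add: numeral_eq_Suc oddprod_Suc)
  then show ?case by (simp add: cong_iff_dvd_diff)
next
  case (step j)
  have "[oddprod 0 (2 * 2 ^ j) = oddprod 0 (2 ^ j) ^ 2] (mod 2 ^ (2 * j + 2))"
    using oddprod_mult_pow2_cong[of j 2] step(1) by simp
  moreover have "(2::int) ^ (j + 5) dvd 2 ^ (2 * j + 2)"
    using step(1) by (intro le_imp_power_dvd) simp
  ultimately have "[oddprod 0 (2 * 2 ^ j) = oddprod 0 (2 ^ j) ^ 2] (mod 2 ^ (j + 5))"
    by (rule cong_dvd_modulus)
  also have "[oddprod 0 (2 ^ j) ^ 2 = 1 + 2 ^ (j + 2)] (mod 2 ^ (j + 5))"
    using step(1,3) by (intro square_one_plus_pow2_cong) simp_all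
  finally show ?case by (simp add: add.commute)
qed

definition block_coeff :: "nat \<Rightarrow> int" where
  "block_coeff N = (if N = 3 then 5 else 1)"

lemma odd_block_coeff: "odd (block_coeff N)"
  by (simp add: block_coeff_def)

lemma oddprod_block_cong:
  assumes "3 \<le> N"
  shows "[oddprod 0 (2 ^ (N - 1)) = 1 + block_coeff N * 2 ^ N] (mod 2 ^ (N + 3))"
proof (cases "N = 3")
  case True
  have "oddprod 0 4 = 105" by (simp add: numeral_eq_Suc oddprod_Suc)
  with True show ?thesis by (simp add: block_coeff_def cong_iff_dvd_diff)
next
  case False
  with assms have "3 \<le> N - 1" by simp
  from oddprod_pow2_cong[OF this] False assms show ?thesis
    by (simp add: block_coeff_def add.commute)
qed

lemma oddprod_mult_block_cong:
  assumes "3 \<le> N"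
  shows "[oddprod 0 (k * 2 ^ (N - 1)) = 1 + int k * block_coeff N * 2 ^ N] (mod 2 ^ (N + 3))"
proof -
  have "[oddprod 0 (k * 2 ^ (N - 1)) = oddprod 0 (2 ^ (N - 1)) ^ k] (mod 2 ^ (2 * (N - 1) + 2))"
    using assms by (intro oddprod_mult_pow2_cong) simp
  moreover have "(2::int) ^ (N + 3) dvd 2 ^ (2 * (N - 1) + 2)"
    using assms by (intro le_imp_power_dvd) simp
  ultimately have "[oddprod 0 (k * 2 ^ (N - 1)) = oddprod 0 (2 ^ (N - 1)) ^ k] (mod 2 ^ (N + 3))"
    by (rule cong_dvd_modulus)
  also have "[oddprod 0 (2 ^ (N - 1)) ^ k = (1 + block_coeff N * 2 ^ N) ^ k] (mod 2 ^ (N + 3))"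
    using oddprod_block_cong[OF assms] by (rule cong_pow)
  also have "[(1 + block_coeff N * 2 ^ N) ^ k = 1 + int k * block_coeff N * 2 ^ N] (mod 2 ^ (N + 3))"
  proof -
    have "(2::int) ^ (N + 3) dvd 2 ^ N * 2 ^ N"
      using assms by (simp flip: power_add add: le_imp_power_dvd)
    then have "(2::int) ^ (N + 3) dvd (block_coeff N * 2 ^ N) ^ 2"
      by (simp add: power2_eq_square mult_ac)
    with one_plus_power_cong show ?thesis
      by (metis cong_dvd_modulus mult.assoc)
  qed
  finally show ?thesis .
qed

lemma dfact_pow2_Suc_cong:
  assumes "3 \<le> N"
  shows "[int (dfact (k * 2 ^ N + 1)) = 1] (mod 2 ^ (N + 1))"
proof -
  define c where "c = block_coeff N"
  define x :: int where "x = int k * 2 ^ N"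
  have half: "k * 2 ^ N = 2 * (k * 2 ^ (N - 1))" using assms by (cases N) simp_all
  have x_half: "x = 2 * int (k * 2 ^ (N - 1))"
    using arg_cong[OF half, of int] unfolding x_def by simp
  have "int (dfact (k * 2 ^ N + 1)) = oddprod 0 (k * 2 ^ (N - 1)) * (1 + x)"
    unfolding half x_half dfact_double_Suc by (simp add: add.commute)
  also have "[\<dots> = (1 + c * x) * (1 + x)] (mod 2 ^ (N + 1))"
  proof -
    have "[oddprod 0 (k * 2 ^ (N - 1)) = 1 + c * x] (mod 2 ^ (N + 3))"
      using oddprod_mult_block_cong[OF assms, of k] by (simp add: c_def x_def mult_ac)
    then have "[oddprod 0 (k * 2 ^ (N - 1)) = 1 + c * x] (mod 2 ^ (N + 1))"
      by (rule cong_dvd_modulus) (rule le_imp_power_dvd, simp)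
    then show ?thesis by (rule cong_scalar_right)
  qed
  also have "[(1 + c * x) * (1 + x) = 1] (mod 2 ^ (N + 1))"
  proof -
    \<comment> \<open>the excess is x (c + 1 + c x), and c + 1 + c x is even because c is odd\<close>
    have "even (c + 1 + c * x)"
      using odd_block_coeff[of N] assms unfolding c_def x_def by (cases N) simp_all
    then have "2 ^ N * 2 dvd x * (c + 1 + c * x)"
      unfolding x_def by (intro mult_dvd_mono) simp_all
    moreover have "(1 + c * x) * (1 + x) - 1 = x * (c + 1 + c * x)"
      by (simp add: algebra_simps)
    ultimately show ?thesis
      unfolding cong_iff_dvd_diff by (simp add: mult.commute)
  qed
  finally show ?thesis .
qed

lemma dfact_pow2_minus_3_cong:
  assumes "3 \<le> N" and "1 \<le> k"
  shows "[int (dfact (k * 2 ^ N - 3)) = -1 - (block_coeff N + 1) * int k * 2 ^ N] (mod 2 ^ (N + 3))"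
proof -
  define c where "c = block_coeff N"
  define x :: int where "x = int k * 2 ^ N"
  define X where "X = int (dfact (k * 2 ^ N - 3))"
  have half: "k * 2 ^ N = 2 * (k * 2 ^ (N - 1))" using assms(1) by (cases N) simp_all
  have x_half: "x = 2 * int (k * 2 ^ (N - 1))"
    using arg_cong[OF half, of int] unfolding x_def by simp
  have "1 \<le> k * 2 ^ (N - 1)" using assms(2) by simp
  from dfact_double_minus_3[OF this]
  have "X * (x - 1) = oddprod 0 (k * 2 ^ (N - 1))"
    unfolding X_def x_half half by simp
  also have "[\<dots> = 1 + c * x] (mod 2 ^ (N + 3))"
    using oddprod_mult_block_cong[OF assms(1), of k] by (simp add: c_def x_def mult_ac)
  \<comment> \<open>the candidate solves the same congruence because x^2 vanishes modulo 2^(N+3)\<close>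
  also have "[1 + c * x = (-1 - (c + 1) * x) * (x - 1)] (mod 2 ^ (N + 3))"
  proof -
    have "(2::int) ^ (N + 3) dvd 2 ^ N * 2 ^ N"
      using assms(1) by (simp flip: power_add add: le_imp_power_dvd)
    then have "2 ^ (N + 3) dvd x * x * (c + 1)"
      unfolding x_def by (simp add: mult_ac)
    moreover have "1 + c * x - (-1 - (c + 1) * x) * (x - 1) = x * x * (c + 1)"
      by (simp add: algebra_simps)
    ultimately show ?thesis unfolding cong_iff_dvd_diff by simp
  qed
  finally have "[X * (x - 1) = (-1 - (c + 1) * x) * (x - 1)] (mod 2 ^ (N + 3))" .
  moreover have "coprime (x - 1) (2 ^ (N + 3))"
    using assms(1) unfolding x_def by (cases N) simp_all
  ultimately have "[X = -1 - (c + 1) * x] (mod 2 ^ (N + 3))"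
    by (simp add: cong_mult_rcancel)
  then show ?thesis unfolding X_def x_def c_def by (simp add: mult_ac)
qed

lemma odd_cong_sign_mod_4:
  assumes "odd k"
  shows "[int k = (-1) ^ ((k - 1) div 2)] (mod 4)"
proof -
  obtain j where k: "k = 2 * j + 1" using assms by (elim oddE)
  show ?thesis
  proof (cases "even j")
    case True
    then obtain i where "j = 2 * i" by (elim evenE)
    then show ?thesis unfolding k cong_iff_dvd_diff by simp
  next
    case False
    then obtain i where "j = 2 * i + 1" by (elim oddE)
    then have "int k - (-1) ^ ((k - 1) div 2) = 4 * (int i + 1)" unfolding k by simp
    then show ?thesis unfolding cong_iff_dvd_diff by simp
  qed
qed

lemma dfact_8_minus_3_cong:
  assumes "odd k"
  shows "[int (dfact (k * 2 ^ 3 - 3)) = -1 + (-1) ^ ((k - 1) div 2) * 2 ^ 4] (mod 2 ^ 6)"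
proof -
  have "1 \<le> k" using assms by (cases k) simp_all
  from dfact_pow2_minus_3_cong[OF _ this, of 3]
  have "[int (dfact (k * 2 ^ 3 - 3)) = -1 - 48 * int k] (mod 2 ^ 6)"
    by (simp add: block_coeff_def)
  also have "[-1 - 48 * int k = -1 + 16 * int k] (mod 2 ^ 6)"
    unfolding cong_iff_dvd_diff by simp
  also have "[-1 + 16 * int k = -1 + 16 * (-1) ^ ((k - 1) div 2)] (mod 2 ^ 6)"
    using cong_cmult_leftI[OF odd_cong_sign_mod_4[OF assms], of 16]
    by (intro cong_add) simp_all
  finally show ?thesis by (simp add: mult.commute)
qed

lemma dfact_pow2_minus_3_cong_ge_4:
  assumes "4 \<le> N" and "odd k"
  shows "[int (dfact (k * 2 ^ N - 3)) = -1 + (-1) ^ ((k + 1) div 2) * 2 ^ (N + 1)] (mod 2 ^ (N + 3))"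
proof -
  have "1 \<le> k" using assms(2) by (cases k) simp_all
  from dfact_pow2_minus_3_cong[OF _ this, of N] assms(1)
  have "[int (dfact (k * 2 ^ N - 3)) = -1 - 2 ^ (N + 1) * int k] (mod 2 ^ (N + 3))"
    by (simp add: block_coeff_def mult_ac)
  also have "[-1 - 2 ^ (N + 1) * int k = -1 - 2 ^ (N + 1) * (-1) ^ ((k - 1) div 2)] (mod 2 ^ (N + 3))"
    using cong_cmult_leftI[OF odd_cong_sign_mod_4[OF assms(2)], of "2 ^ (N + 1)"]
    by (intro cong_diff) (simp_all add: power_add mult_ac)
  also have "(k + 1) div 2 = Suc ((k - 1) div 2)"
    using assms(2) by (auto elim!: oddE)
  then have "-1 - 2 ^ (N + 1) * (-1) ^ ((k - 1) div 2) = -1 + (-1) ^ ((k + 1) div 2) * (2::int) ^ (N + 1)"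
    by simp
  finally show ?thesis .
qed

lemma dfact_pow2_minus_3_cong_mod_N_plus_2:
  assumes "3 \<le> N" and "odd k"
  shows "[int (dfact (k * 2 ^ N - 3)) = -1 + 2 ^ (N + 1)] (mod 2 ^ (N + 2))"
proof -
  obtain e where "[int (dfact (k * 2 ^ N - 3)) = -1 + (-1) ^ e * 2 ^ (N + 1)] (mod 2 ^ (N + 3))"
  proof (cases "N = 3")
    case True
    with dfact_8_minus_3_cong[OF assms(2)]
    have "[int (dfact (k * 2 ^ N - 3)) = -1 + (-1) ^ ((k - 1) div 2) * 2 ^ (N + 1)] (mod 2 ^ (N + 3))"
      by simp
    then show ?thesis by (rule that)
  next
    case False
    with assms(1) have "4 \<le> N" by simp
    from dfact_pow2_minus_3_cong_ge_4[OF this assms(2)] show ?thesis by (rule that)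
  qed
  then have "[int (dfact (k * 2 ^ N - 3)) = -1 + (-1) ^ e * 2 ^ (N + 1)] (mod 2 ^ (N + 2))"
    by (rule cong_dvd_modulus) (rule le_imp_power_dvd, simp)
  also have "[-1 + (-1) ^ e * 2 ^ (N + 1) = -1 + 2 ^ (N + 1)] (mod (2::int) ^ (N + 2))"
    by (cases "even e") (simp_all add: cong_iff_dvd_diff)
  finally show ?thesis .
qed

theorem lemma4p2:
  fixes k N a :: nat
  assumes "k \<ge> 1" and "N \<ge> 3" and "a \<ge> 2"
  shows
    "(even a \<longrightarrow>
        [int (dfact (k * 2^N + 2*a - 3) div dfact (k * 2^N + 1)) = int (dfact (2*a - 3))]
          (mod 2 ^ (N + 1 + min (multiplicity (2::nat) a) (N - 1)))) \<and>
     (odd a \<longrightarrow>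
        [int (dfact (k * 2^N + 2*a - 3) div dfact (k * 2^N + 1)) = int (dfact (2*a - 3)) + int k * 2^N]
          (mod 2 ^ (N + 1))) \<and>
    (even a \<longrightarrow>
        [int (dfact (k * 2^N + 2*a - 3)) = int (dfact (2*a - 3))] (mod 2 ^ (N + 1))) \<and>
     (odd a \<longrightarrow>
        [int (dfact (k * 2^N + 2*a - 3)) = int (dfact (2*a - 3)) + int k * 2^N] (mod 2 ^ (N + 1))) \<and>
    (odd k \<longrightarrow>
       ((N = 3 \<longrightarrow>
          [int (dfact (k * 2^N - 3)) = -1 + (-1) ^ ((k - 1) div 2) * 2 ^ (N + 1)] (mod 2 ^ (N + 3))) \<and>
        (N \<ge> 4 \<longrightarrow>
          [int (dfact (k * 2^N - 3)) = -1 + (-1) ^ ((k + 1) div 2) * 2 ^ (N + 1)] (mod 2 ^ (N + 3))) \<and>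
        [int (dfact (k * 2^N - 3)) = -1 + 2 ^ (N + 1)] (mod 2 ^ (N + 2))))"
proof -
  let ?t = "int (k * 2 ^ N)"
  let ?Q = "int (dfact (k * 2 ^ N + 2 * a - 3) div dfact (k * 2 ^ N + 1))"
  have "1 \<le> N" and t_dvd: "2 ^ N dvd ?t" using assms(2) by simp_all
  have big: "k * 2 ^ N + 2 * a - 3 = (k * 2 ^ N + 1) + 2 * (a - 2)"
    and small: "2 * a - 3 = 1 + 2 * (a - 2)" using assms(3) by simp_all
  have Q: "?Q = oddprod (2 + ?t) (a - 2)"
    unfolding big dfact_add_double_div by (simp add: add.commute)
  have base: "int (dfact (2 * a - 3)) = oddprod 2 (a - 2)"
    using dfact_add_double[of 1 "a - 2"] by (simp add: small)
  have prod: "int (dfact (k * 2 ^ N + 2 * a - 3)) = int (dfact (k * 2 ^ N + 1)) * ?Q"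
    unfolding Q by (simp only: big dfact_add_double) (simp add: add.commute)
  have i_even: "[?Q = int (dfact (2 * a - 3))] (mod 2 ^ (N + 1 + min (multiplicity (2::nat) a) (N - 1)))"
    if "even a" unfolding Q base using oddprod_shift_even_cong[OF that assms(3) \<open>1 \<le> N\<close> t_dvd] .
  have i_odd: "[?Q = int (dfact (2 * a - 3)) + int k * 2 ^ N] (mod 2 ^ (N + 1))"
    if "odd a" unfolding Q base using oddprod_shift_odd_cong[of 2 "a - 2", OF _ _ \<open>1 \<le> N\<close> t_dvd] that assms(3)
    by simp
  have "[?Q = int (dfact (2 * a - 3))] (mod 2 ^ (N + 1))" if "even a"
    using i_even[OF that] by (rule cong_dvd_modulus) (rule le_imp_power_dvd, simp)
  with i_odd have ii: "[int (dfact (k * 2 ^ N + 2 * a - 3)) = (if even a then int (dfact (2 * a - 3))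
      else int (dfact (2 * a - 3)) + int k * 2 ^ N)] (mod 2 ^ (N + 1))"
    unfolding prod using cong_mult[OF dfact_pow2_Suc_cong[OF assms(2)]] by fastforce
  show ?thesis
    using i_even i_odd ii dfact_8_minus_3_cong dfact_pow2_minus_3_cong_ge_4
      dfact_pow2_minus_3_cong_mod_N_plus_2[OF assms(2)]
    by auto
qed

end
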